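(* Let $I=\mathcal{M}^0[K,G,K;P]$ be a finite Rees $0$-matrix semigroup with $|K|\ge3$, where $P$ is the $K\times K$ matrix with $p_{\kappa,\kappa}=e$ and $p_{\lambda,\kappa}=0$ for $\lambda\ne\kappa$. Then $\sigma_i(I)=3$.
   Context: $G$ is a finite group with identity $e$. $\mathcal{M}^0[K,G,K;P]$ is $(K\times G\times K)\cup\{0\}$ with $(\kappa,g,\lambda)(\mu,h,\nu)=(\kappa,gp_{\lambda,\mu}h,\nu)$ if $p_{\lambda,\mu}\ne0$, $=0$ otherwise, and $0$ a zero element; it is an inverse semigroup. An inverse subsemigroup is a subsemigroup closed under taking the unique inverse. $\sigma_i(I)$ is the least positive integer $n$ such that $I$ is the union of $n$ proper inverse subsemigroups, or $\infty$ if none exists. *)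

theory Defs
  imports "HOL-Algebra.Group" "HOL-Library.Extended_Nat"
begin

definition sg_inverses :: "'a set \<Rightarrow> ('a \<Rightarrow> 'a \<Rightarrow> 'a) \<Rightarrow> 'a \<Rightarrow> 'a set" where
  "sg_inverses S m x = {y \<in> S. m (m x y) x = x \<and> m (m y x) y = y}"

definition inverse_subsemigroup :: "'a set \<Rightarrow> ('a \<Rightarrow> 'a \<Rightarrow> 'a) \<Rightarrow> 'a set \<Rightarrow> bool" where
  "inverse_subsemigroup S m T \<longleftrightarrow>
     T \<subseteq> S \<and> (\<forall>a\<in>T. \<forall>b\<in>T. m a b \<in> T) \<and> (\<forall>x\<in>T. sg_inverses S m x \<subseteq> T)"

definition covers_by_proper_inv :: "'a set \<Rightarrow> ('a \<Rightarrow> 'a \<Rightarrow> 'a) \<Rightarrow> nat \<Rightarrow> bool" where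
  "covers_by_proper_inv S m n \<longleftrightarrow>
     (\<exists>T :: nat \<Rightarrow> 'a set. (\<forall>i<n. inverse_subsemigroup S m (T i) \<and> T i \<noteq> S)
                          \<and> (\<Union>i<n. T i) = S)"

definition sigma_i :: "'a set \<Rightarrow> ('a \<Rightarrow> 'a \<Rightarrow> 'a) \<Rightarrow> enat" where
  "sigma_i S m = (if \<exists>n>0. covers_by_proper_inv S m n
                  then enat (LEAST n. n > 0 \<and> covers_by_proper_inv S m n) else \<infinity>)"

text \<open>Rees 0-matrix semigroup M^0[K,G,K;P]; the zero is None, (k,g,l) is Some (k,g,l);
  a matrix entry None stands for 0.\<close>
definition rees0_carrier :: "'k set \<Rightarrow> ('g, 'b) monoid_scheme \<Rightarrow> ('k \<times> 'g \<times> 'k) option set" where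
  "rees0_carrier K G = insert None (Some ` (K \<times> carrier G \<times> K))"

fun rees0_mult :: "('g, 'b) monoid_scheme \<Rightarrow> ('k \<Rightarrow> 'k \<Rightarrow> 'g option)
     \<Rightarrow> ('k \<times> 'g \<times> 'k) option \<Rightarrow> ('k \<times> 'g \<times> 'k) option \<Rightarrow> ('k \<times> 'g \<times> 'k) option" where
  "rees0_mult G P (Some (k1, g, l1)) (Some (k2, h, l2)) =
     (case P l1 k2 of None \<Rightarrow> None | Some p \<Rightarrow> Some (k1, g \<otimes>\<^bsub>G\<^esub> p \<otimes>\<^bsub>G\<^esub> h, l2))"
| "rees0_mult G P _ _ = None"

definition diag_matrix :: "('g, 'b) monoid_scheme \<Rightarrow> 'k \<Rightarrow> 'k \<Rightarrow> 'g option" where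
  "diag_matrix G l1 k1 = (if l1 = k1 then Some \<one>\<^bsub>G\<^esub> else None)"

end

theory Submission
  imports Defs
begin

text \<open>
  For an inverse subsemigroup \<open>T\<close> of \<open>I\<close>, the pairs \<open>(k,l)\<close> whose whole block
  \<open>{(k,g,l) | g \<in> G}\<close> lies in \<open>T\<close> form a partial equivalence relation on \<open>K\<close>. If
  \<open>I = T\<^sub>1 \<union> T\<^sub>2\<close>, every block lies in \<open>T\<^sub>1\<close> or in \<open>T\<^sub>2\<close> (as a group is not the union of two
  proper subgroups), and when two partial equivalence relations together cover all pairs of
  \<open>K\<close>, one of them is total. But an inverse subsemigroup containing all blocks contains
  \<open>0 = (a,e,a)(b,e,b)\<close> and hence is \<open>I\<close>. So \<open>\<sigma>\<^sub>i(I) > 2\<close>, while for distinct \<open>a, b, c \<in> K\<close> the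
  three inverse subsemigroups avoiding the index \<open>a\<close>, \<open>b\<close>, \<open>c\<close> respectively cover \<open>I\<close>.
\<close>

lemma inverse_subsemigroup_mult_closed:
  "inverse_subsemigroup S m T \<Longrightarrow> x \<in> T \<Longrightarrow> y \<in> T \<Longrightarrow> m x y \<in> T"
  unfolding inverse_subsemigroup_def by blast

lemma not_covers_by_proper_inv_1: "\<not> covers_by_proper_inv S m 1"
  unfolding covers_by_proper_inv_def by (simp add: lessThan_Suc)

lemma covers_by_proper_inv_2E:
  assumes "covers_by_proper_inv S m 2"
  obtains T\<^sub>1 T\<^sub>2 where "inverse_subsemigroup S m T\<^sub>1" "T\<^sub>1 \<noteq> S"
    "inverse_subsemigroup S m T\<^sub>2" "T\<^sub>2 \<noteq> S" "T\<^sub>1 \<union> T\<^sub>2 = S"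
proof -
  obtain T :: "nat \<Rightarrow> _" where "\<forall>i<2. inverse_subsemigroup S m (T i) \<and> T i \<noteq> S" "(\<Union>i<2. T i) = S"
    using assms unfolding covers_by_proper_inv_def by blast
  moreover have "{..<2::nat} = {0, 1}" by auto
  ultimately show thesis using that[of "T 0" "T 1"] by auto
qed

lemma covers_by_proper_inv_3I:
  assumes "\<And>T. T \<in> {T\<^sub>1, T\<^sub>2, T\<^sub>3} \<Longrightarrow> inverse_subsemigroup S m T \<and> T \<noteq> S"
    and "T\<^sub>1 \<union> T\<^sub>2 \<union> T\<^sub>3 = S"
  shows "covers_by_proper_inv S m 3"
proof -
  define T where "T i = (if i = 0 then T\<^sub>1 else if i = 1 then T\<^sub>2 else T\<^sub>3)" for i :: nat
  have "{..<3::nat} = {0, 1, 2}" by auto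
  then have "(\<Union>i<3. T i) = S" and "\<forall>i<3. inverse_subsemigroup S m (T i) \<and> T i \<noteq> S"
    using assms by (auto simp: T_def)
  then show ?thesis unfolding covers_by_proper_inv_def by blast
qed

lemma sigma_i_eqI:
  assumes "n > 0" "covers_by_proper_inv S m n"
    and "\<And>j. 0 < j \<Longrightarrow> j < n \<Longrightarrow> \<not> covers_by_proper_inv S m j"
  shows "sigma_i S m = enat n"
proof -
  have "(LEAST j. j > 0 \<and> covers_by_proper_inv S m j) = n"
    using assms by (intro Least_equality) (auto simp: not_less[symmetric])
  then show ?thesis using assms(1,2) unfolding sigma_i_def by auto
qed

locale diag_rees = group G for G :: "('g, 'b) monoid_scheme" (structure) + fixes K :: "'k set"
begin

abbreviation I :: "('k \<times> 'g \<times> 'k) option set" where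
  "I \<equiv> rees0_carrier K G"

abbreviation rmul where
  "rmul \<equiv> rees0_mult G (diag_matrix G)"

lemma rmul_Some [simp]:
  "g \<in> carrier G \<Longrightarrow> rmul (Some (k, g, l)) (Some (l', h, n)) =
     (if l = l' then Some (k, g \<otimes> h, n) else None)"
  by (simp add: diag_matrix_def)

declare rees0_mult.simps(1) [simp del]

lemma rmul_None [simp]: "rmul None x = None" "rmul x None = None"
  by (cases x; simp)+

lemma Some_in_I_iff [simp]: "Some (k, g, l) \<in> I \<longleftrightarrow> k \<in> K \<and> g \<in> carrier G \<and> l \<in> K"
  and None_in_I [simp]: "None \<in> I"
  by (auto simp: rees0_carrier_def)

lemma sg_inverses_None: "sg_inverses I rmul None = {None}"
  by (auto simp: sg_inverses_def)

lemma sg_inverses_Some: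
  assumes "k \<in> K" "g \<in> carrier G" "l \<in> K"
  shows "sg_inverses I rmul (Some (k, g, l)) = {Some (l, inv g, k)}"
proof -
  have "y = Some (l, inv g, k)" if "y \<in> sg_inverses I rmul (Some (k, g, l))" for y
  proof -
    from that obtain h where h: "h \<in> carrier G" "y = Some (l, h, k)" "g \<otimes> h = \<one>"
      using assms by (cases y) (auto simp: sg_inverses_def split: if_splits)
    have "h = inv g \<otimes> (g \<otimes> h)"
      using h(1) assms(2) by (simp add: m_assoc[symmetric])
    also have "\<dots> = inv g"
      using h(3) assms(2) by simp
    finally show ?thesis using h(2) by simp
  qed
  then show ?thesis using assms by (auto simp: sg_inverses_def m_assoc)
qed

lemma inverse_subsemigroup_iff:
  "inverse_subsemigroup I rmul T \<longleftrightarrow>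
     T \<subseteq> I \<and> (\<forall>x\<in>T. \<forall>y\<in>T. rmul x y \<in> T) \<and>
     (\<forall>k g l. Some (k, g, l) \<in> T \<longrightarrow> Some (l, inv g, k) \<in> T)"
proof -
  have "sg_inverses I rmul x \<subseteq> T \<longleftrightarrow>
          (\<forall>k g l. x = Some (k, g, l) \<longrightarrow> Some (l, inv g, k) \<in> T)"
    if "x \<in> T" "T \<subseteq> I" for x
    using that by (cases x) (auto simp: sg_inverses_None sg_inverses_Some)
  then show ?thesis unfolding inverse_subsemigroup_def by blast
qed

lemma inverse_subsemigroup_Some_inv:
  "inverse_subsemigroup I rmul T \<Longrightarrow> Some (k, g, l) \<in> T \<Longrightarrow> Some (l, inv g, k) \<in> T"
  unfolding inverse_subsemigroup_iff by blast

definition contains_block :: "('k \<times> 'g \<times> 'k) option set \<Rightarrow> 'k \<Rightarrow> 'k \<Rightarrow> bool" where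
  "contains_block T k l \<longleftrightarrow> (\<forall>g\<in>carrier G. Some (k, g, l) \<in> T)"

lemma contains_block_sym:
  assumes "inverse_subsemigroup I rmul T" "contains_block T k l"
  shows "contains_block T l k"
  unfolding contains_block_def
proof
  fix g assume "g \<in> carrier G"
  then have "Some (k, inv g, l) \<in> T" using assms(2) by (simp add: contains_block_def)
  then show "Some (l, g, k) \<in> T"
    using inverse_subsemigroup_Some_inv[OF assms(1)] \<open>g \<in> carrier G\<close> by fastforce
qed

lemma contains_block_trans:
  assumes "inverse_subsemigroup I rmul T" "contains_block T k l" "contains_block T l n"
  shows "contains_block T k n"
  unfolding contains_block_def
proof
  fix g assume g: "g \<in> carrier G"
  have "Some (k, g, l) \<in> T" "Some (l, \<one>, n) \<in> T"
    using assms(2,3) g by (auto simp: contains_block_def)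
  from inverse_subsemigroup_mult_closed[OF assms(1) this] g show "Some (k, g, n) \<in> T" by simp
qed

lemma union_contains_block:
  assumes T\<^sub>1: "inverse_subsemigroup I rmul T\<^sub>1" and T\<^sub>2: "inverse_subsemigroup I rmul T\<^sub>2"
    and union: "T\<^sub>1 \<union> T\<^sub>2 = I" and "k \<in> K" "l \<in> K"
  shows "contains_block T\<^sub>1 k l \<or> contains_block T\<^sub>2 k l"
proof (rule ccontr)
  assume "\<not> ?thesis"
  then obtain g h where g: "g \<in> carrier G" "Some (k, g, l) \<notin> T\<^sub>1"
    and h: "h \<in> carrier G" "Some (k, h, l) \<notin> T\<^sub>2"
    by (auto simp: contains_block_def)
  have "Some (k, g, l) \<in> T\<^sub>1 \<union> T\<^sub>2" "Some (k, h, l) \<in> T\<^sub>1 \<union> T\<^sub>2"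
    unfolding union using g h \<open>k \<in> K\<close> \<open>l \<in> K\<close> by simp_all
  then have g2: "Some (k, g, l) \<in> T\<^sub>2" and h1: "Some (k, h, l) \<in> T\<^sub>1"
    using g h by blast+
  \<comment> \<open>whichever side contains \<open>(k, g h\<^sup>-\<^sup>1, k)\<close> would then contain \<open>(k,g,l)\<close> resp. \<open>(k,h,l)\<close>\<close>
  have "Some (k, g \<otimes> inv h, k) \<in> I" using g h \<open>k \<in> K\<close> by simp
  then show False
    unfolding union[symmetric]
  proof
    assume "Some (k, g \<otimes> inv h, k) \<in> T\<^sub>1"
    from inverse_subsemigroup_mult_closed[OF T\<^sub>1 this h1]
    show False using g h by (simp add: m_assoc)
  next
    assume "Some (k, g \<otimes> inv h, k) \<in> T\<^sub>2"
    from inverse_subsemigroup_mult_closed[OF T\<^sub>2 inverse_subsemigroup_Some_inv[OF T\<^sub>2 this] g2]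
    have "Some (k, inv (g \<otimes> inv h) \<otimes> g, l) \<in> T\<^sub>2" using g h by simp
    moreover have "inv (g \<otimes> inv h) \<otimes> g = h"
      using g h by (simp add: inv_mult_group m_assoc)
    ultimately show False using h by simp
  qed
qed

lemma contains_all_blocks_eq_I:
  assumes "inverse_subsemigroup I rmul T" "\<forall>k\<in>K. \<forall>l\<in>K. contains_block T k l"
    and "a \<in> K" "b \<in> K" "a \<noteq> b"
  shows "T = I"
proof -
  have "Some (a, \<one>, a) \<in> T" "Some (b, \<one>, b) \<in> T"
    using assms(2-4) by (auto simp: contains_block_def)
  from inverse_subsemigroup_mult_closed[OF assms(1) this] have "None \<in> T"
    using \<open>a \<noteq> b\<close> by simp
  moreover have "T \<subseteq> I" using assms(1) by (simp add: inverse_subsemigroup_def)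
  ultimately show ?thesis
    using assms(2) by (auto simp: rees0_carrier_def contains_block_def)
qed

lemma contains_all_blocks_of_union:
  assumes T\<^sub>1: "inverse_subsemigroup I rmul T\<^sub>1" and T\<^sub>2: "inverse_subsemigroup I rmul T\<^sub>2"
    and union: "T\<^sub>1 \<union> T\<^sub>2 = I"
    and "x \<in> K" "y \<in> K" "\<not> contains_block T\<^sub>1 x y"
  shows "\<forall>k\<in>K. \<forall>l\<in>K. contains_block T\<^sub>2 k l"
proof -
  note block = union_contains_block[OF T\<^sub>1 T\<^sub>2 union]
  have xy: "contains_block T\<^sub>2 x y" using block assms(4-6) by blast
  have to_x: "contains_block T\<^sub>2 z x" if "z \<in> K" for z
  proof (cases "contains_block T\<^sub>1 z x")
    case True
    have "\<not> contains_block T\<^sub>1 z y"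
      using True assms(6) contains_block_sym[OF T\<^sub>1] contains_block_trans[OF T\<^sub>1] by blast
    then have "contains_block T\<^sub>2 z y" using block \<open>z \<in> K\<close> \<open>y \<in> K\<close> by blast
    then show ?thesis
      using contains_block_sym[OF T\<^sub>2 xy] contains_block_trans[OF T\<^sub>2] by blast
  next
    case False
    then show ?thesis using block \<open>z \<in> K\<close> \<open>x \<in> K\<close> by blast
  qed
  show ?thesis
    using to_x contains_block_sym[OF T\<^sub>2] contains_block_trans[OF T\<^sub>2] by blast
qed

lemma not_covers_by_proper_inv_2:
  assumes "a \<in> K" "b \<in> K" "a \<noteq> b"
  shows "\<not> covers_by_proper_inv I rmul 2"
proof
  assume "covers_by_proper_inv I rmul 2"
  then obtain T\<^sub>1 T\<^sub>2 where T\<^sub>1: "inverse_subsemigroup I rmul T\<^sub>1" "T\<^sub>1 \<noteq> I"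
    and T\<^sub>2: "inverse_subsemigroup I rmul T\<^sub>2" "T\<^sub>2 \<noteq> I" and union: "T\<^sub>1 \<union> T\<^sub>2 = I"
    by (rule covers_by_proper_inv_2E)
  obtain x y where "x \<in> K" "y \<in> K" "\<not> contains_block T\<^sub>1 x y"
    using contains_all_blocks_eq_I[OF T\<^sub>1(1) _ assms] T\<^sub>1(2) by blast
  from contains_all_blocks_of_union[OF T\<^sub>1(1) T\<^sub>2(1) union this]
  show False using contains_all_blocks_eq_I[OF T\<^sub>2(1) _ assms] T\<^sub>2(2) by blast
qed

definition avoiding :: "'k \<Rightarrow> ('k \<times> 'g \<times> 'k) option set" where
  "avoiding a = insert None (Some ` ((K - {a}) \<times> carrier G \<times> (K - {a})))"

lemma inverse_subsemigroup_avoiding: "inverse_subsemigroup I rmul (avoiding a)"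
  unfolding inverse_subsemigroup_iff
  by (auto simp: avoiding_def rees0_carrier_def)

lemma avoiding_ne_I:
  assumes "a \<in> K"
  shows "avoiding a \<noteq> I"
proof -
  have "Some (a, \<one>, a) \<in> I" "Some (a, \<one>, a) \<notin> avoiding a"
    using assms by (auto simp: avoiding_def)
  then show ?thesis by blast
qed

lemma avoiding_union_eq_I:
  assumes "a \<noteq> b" "a \<noteq> c" "b \<noteq> c"
  shows "avoiding a \<union> avoiding b \<union> avoiding c = I"
  using assms by (auto simp: avoiding_def rees0_carrier_def)

end

theorem mainTheorem15:
  fixes G :: "('g, 'b) monoid_scheme" and K :: "'k set"
  assumes "group G" and "finite (carrier G)"
    and "finite K" and "card K \<ge> 3"
  shows "sigma_i (rees0_carrier K G) (rees0_mult G (diag_matrix G)) = 3"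
proof -
  interpret diag_rees G K
    using assms(1) by (simp add: diag_rees_def)
  obtain a b c where abc: "a \<in> K" "b \<in> K" "c \<in> K" "a \<noteq> b" "a \<noteq> c" "b \<noteq> c"
  proof -
    obtain B where "B \<subseteq> K" "card B = 3"
      using obtain_subset_with_card_n[OF assms(4)] by blast
    then show thesis using that unfolding card_3_iff by blast
  qed
  have "covers_by_proper_inv I rmul 3"
    using covers_by_proper_inv_3I[OF _ avoiding_union_eq_I[OF abc(4-6)]]
      inverse_subsemigroup_avoiding avoiding_ne_I abc(1-3) by blast
  moreover have "\<not> covers_by_proper_inv I rmul j" if "0 < j" "j < 3" for j
  proof -
    have "j = 1 \<or> j = 2" using that by auto
    then show ?thesis
      using not_covers_by_proper_inv_1 not_covers_by_proper_inv_2[OF abc(1,2,4)] by blast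
  qed
  ultimately have "sigma_i I rmul = enat 3"
    by (intro sigma_i_eqI) auto
  then show ?thesis by (simp add: numeral_eq_enat)
qed

end
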